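(* Let $\mathcal N_d$ be the set of nilpotent linear endomorphisms of $\mathbb K^d$, $K\subset\mathcal N_d$ compact, and $\|\cdot\|$ a norm on $\mathrm{End}(\mathbb K^d)$. Then there exists $C=C(K,\|\cdot\|)>0$ such that $\|\exp(tX)-\mathrm{id}\|\le C\,t\,\|\exp(X)-\mathrm{id}\|$ for all $t\in[0,1]$ and all $X\in K$.
   Context: $\mathbb K\in\{\mathbb R,\mathbb C\}$; $\exp$ is the matrix exponential. *)

theory Defs
  imports "HOL-Analysis.Analysis"
begin

text \<open>Matrices 'K^'n^'n represent End(K^d) with d = CARD('n). Matrix power and
  matrix exponential (with respect to matrix multiplication **).\<close>

primrec matpow :: "'a::semiring_1^'n^'n \<Rightarrow> nat \<Rightarrow> 'a^'n^'n" where
  "matpow X 0 = mat 1"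
| "matpow X (Suc k) = X ** matpow X k"

definition mat_exp :: "'a::{real_normed_field,banach}^'n^'n \<Rightarrow> 'a^'n^'n" where
  "mat_exp X = (\<Sum>k. inverse (fact k) *\<^sub>R matpow X k)"

definition nilpotent_mat :: "'a::semiring_1^'n^'n \<Rightarrow> bool" where
  "nilpotent_mat X \<longleftrightarrow> (\<exists>m. matpow X m = 0)"

definition mat_scale :: "'a::times \<Rightarrow> 'a^'n^'n \<Rightarrow> 'a^'n^'n" where
  "mat_scale c X = (\<chi> i j. c * X $ i $ j)"

definition is_mat_norm :: "('a::real_normed_field^'n^'n \<Rightarrow> real) \<Rightarrow> bool" where
  "is_mat_norm N \<longleftrightarrow>
     (\<forall>X. N X = 0 \<longrightarrow> X = 0) \<and>
     (\<forall>c X. N (mat_scale c X) = norm c * N X) \<and>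
     (\<forall>X Y. N (X + Y) \<le> N X + N Y)"

end

theory Submission
  imports Defs
begin

text \<open>If \<open>X^D = 0\<close>, then \<open>exp X - 1 = \<Sum>{1 \<le> l < D} X^l / l!\<close>; multiplying by \<open>X^(k-1)\<close>
  expresses \<open>X^k\<close> as \<open>X^(k-1) (exp X - 1)\<close> minus higher powers of \<open>X\<close>. By downward induction
  on \<open>k\<close>, every power \<open>X^k\<close> with \<open>k \<ge> 1\<close> is bounded by a constant times \<open>\<parallel>exp X - 1\<parallel>\<close>,
  uniformly on a bounded set of matrices. As \<open>exp (tX) - 1 = \<Sum>{1 \<le> l < D} t^l X^l / l!\<close> and
  \<open>t^l \<le> t\<close> on \<open>[0,1]\<close>, the estimate follows for the Euclidean norm, and for any other norm by
  equivalence of norms. Compactness of \<open>K\<close> enters only through boundedness: a uniform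
  nilpotency index exists anyway, since every nilpotent \<open>X\<close> satisfies \<open>X^D = 0\<close> for \<open>D\<close> the
  (real) dimension of the underlying vector space.\<close>

lemma matpow_add: "matpow X (a + b) = matpow X a ** matpow X b"
  by (induct a) (simp_all add: matrix_mul_assoc)

lemma matpow_Suc_right: "matpow X (Suc k) = matpow X k ** X"
  using matpow_add[of X k 1] by simp

lemma matpow_eq_0_mono:
  assumes "matpow X m = 0" "m \<le> k"
  shows "matpow X k = 0"
  using matpow_add[of X "k - m" m] assms by simp

lemma matpow_scaleR:
  "matpow (t *\<^sub>R (X::'a::real_algebra_1^'n^'n)) k = t ^ k *\<^sub>R matpow X k"
  by (induct k) (simp_all add: matrix_scalar_ac scalar_matrix_assoc[symmetric])

lemma mat_scale_of_real: "mat_scale (of_real t) (X::'a::real_algebra_1^'n^'n) = t *\<^sub>R X"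
  by (simp add: mat_scale_def vec_eq_iff of_real_def)

lemma matrix_mult_sum_right: "A ** sum f S = (\<Sum>i\<in>S. A ** f i)"
  by (induct S rule: infinite_finite_induct) (simp_all add: matrix_add_ldistrib)

definition matpow_kernel :: "'a::real_algebra_1^'n^'n \<Rightarrow> nat \<Rightarrow> ('a^'n) set" where
  "matpow_kernel X k = {v. matpow X k *v v = 0}"

lemma subspace_matpow_kernel: "subspace (matpow_kernel X k)"
  unfolding matpow_kernel_def by (rule linear_subspace_kernel) simp

lemma matpow_kernel_Suc: "matpow_kernel X (Suc k) = {v. X *v v \<in> matpow_kernel X k}"
  unfolding matpow_kernel_def matpow_Suc_right by (simp add: matrix_vector_mul_assoc)

lemma matpow_kernel_mono: "matpow_kernel X k \<subseteq> matpow_kernel X (Suc k)"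
  by (auto simp: matpow_kernel_def matrix_vector_mul_assoc[symmetric])

lemma matpow_kernel_stable:
  assumes "matpow_kernel X (Suc k) = matpow_kernel X k"
  shows "matpow_kernel X (k + j) = matpow_kernel X k"
proof (induct j)
  case (Suc j)
  have "matpow_kernel X (k + Suc j) = {v. X *v v \<in> matpow_kernel X (k + j)}"
    by (simp add: matpow_kernel_Suc)
  also have "\<dots> = matpow_kernel X (Suc k)"
    by (simp add: Suc matpow_kernel_Suc)
  finally show ?case using assms by simp
qed simp

text \<open>Until the kernels exhaust the space they grow strictly, so their dimension grows.\<close>

lemma matpow_kernel_dim_ge:
  fixes X :: "'a::{real_algebra_1,euclidean_space}^'n^'n"
  assumes "matpow X m = 0"
  shows "matpow_kernel X k = UNIV \<or> k \<le> dim (matpow_kernel X k)"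
proof (induct k)
  case (Suc k)
  show ?case
  proof (cases "matpow_kernel X (Suc k) = UNIV")
    case False
    then have not_full: "matpow_kernel X k \<noteq> UNIV"
      using matpow_kernel_mono[of X k] by blast
    have "matpow_kernel X (Suc k) \<noteq> matpow_kernel X k"
    proof
      assume "matpow_kernel X (Suc k) = matpow_kernel X k"
      then have "matpow_kernel X (k + m) = matpow_kernel X k" by (rule matpow_kernel_stable)
      moreover have "matpow_kernel X (k + m) = UNIV"
        using matpow_eq_0_mono[OF assms, of "k + m"] by (simp add: matpow_kernel_def)
      ultimately show False using not_full by simp
    qed
    then have "span (matpow_kernel X k) \<subset> span (matpow_kernel X (Suc k))"
      using matpow_kernel_mono[of X k] by (simp add: span_eq_iff[THEN iffD2, OF subspace_matpow_kernel])
    then have "dim (matpow_kernel X k) < dim (matpow_kernel X (Suc k))" by (rule dim_psubset)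
    then show ?thesis using Suc not_full by simp
  qed simp
qed simp

lemma matpow_DIM_eq_0:
  fixes X :: "'a::{real_algebra_1,euclidean_space}^'n^'n"
  assumes "matpow X m = 0"
  shows "matpow X DIM('a^'n) = 0"
proof -
  have "matpow_kernel X DIM('a^'n) = UNIV"
  proof (rule ccontr)
    assume "matpow_kernel X DIM('a^'n) \<noteq> UNIV"
    then have "DIM('a^'n) \<le> dim (matpow_kernel X DIM('a^'n))"
      using matpow_kernel_dim_ge[OF assms] by blast
    then have "dim (matpow_kernel X DIM('a^'n)) = DIM('a^'n)"
      using dim_subset_UNIV[of "matpow_kernel X DIM('a^'n)"] by linarith
    then have "span (matpow_kernel X DIM('a^'n)) = UNIV" by (metis dim_eq_full)
    then show False
      using \<open>matpow_kernel X DIM('a^'n) \<noteq> UNIV\<close>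
      by (simp add: span_eq_iff[THEN iffD2, OF subspace_matpow_kernel])
  qed
  then show ?thesis by (auto simp: matpow_kernel_def matrix_eq)
qed

lemma mat_exp_eq_sum:
  assumes "matpow X m = 0"
  shows "mat_exp X = (\<Sum>k<m. inverse (fact k) *\<^sub>R matpow X k)"
  unfolding mat_exp_def
  by (rule suminf_finite) (use matpow_eq_0_mono[OF assms] in auto)

text \<open>For \<open>m = 0\<close> both sides vanish, because then \<open>mat 1 = matpow X 0 = 0\<close>.\<close>

lemma mat_exp_minus_1_eq_sum:
  assumes "matpow X m = 0"
  shows "mat_exp X - mat 1 = (\<Sum>l\<in>{1..<m}. inverse (fact l) *\<^sub>R matpow X l)"
proof (cases m)
  case 0
  then show ?thesis using assms mat_exp_eq_sum[OF assms] by simp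
next
  case (Suc m')
  then show ?thesis
    using mat_exp_eq_sum[OF assms] by (simp add: lessThan_atLeast0 sum.atLeast_Suc_lessThan)
qed

lemma mat_exp_scaleR_minus_1_eq_sum:
  assumes "matpow X m = 0"
  shows "mat_exp (t *\<^sub>R X) - mat 1 = (\<Sum>l\<in>{1..<m}. (t ^ l / fact l) *\<^sub>R matpow X l)"
proof -
  have "matpow (t *\<^sub>R X) m = 0" using assms by (simp add: matpow_scaleR)
  from mat_exp_minus_1_eq_sum[OF this] show ?thesis
    by (simp add: matpow_scaleR divide_inverse mult.commute)
qed

lemma matpow_mult_mat_exp_minus_1:
  assumes "matpow X m = 0"
  shows "matpow X j ** (mat_exp X - mat 1)
    = (\<Sum>l\<in>{1..<m}. inverse (fact l) *\<^sub>R matpow X (j + l))"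
  by (simp add: mat_exp_minus_1_eq_sum[OF assms] matrix_mult_sum_right matrix_scalar_ac
      scalar_matrix_assoc[symmetric] matpow_add)

locale real_seminorm =
  fixes f :: "'v::euclidean_space \<Rightarrow> real"
  assumes add_le: "f (x + y) \<le> f x + f y"
    and scaleR: "f (r *\<^sub>R x) = \<bar>r\<bar> * f x"
begin

lemma zero [simp]: "f 0 = 0"
  using scaleR[of 0 0] by simp

lemma minus: "f (- x) = f x"
  using scaleR[of "-1" x] by simp

lemma nonneg: "0 \<le> f x"
  using add_le[of x "- x"] by (simp add: minus)

lemma sum_le: "f (sum g S) \<le> (\<Sum>i\<in>S. f (g i))"
  by (induct S rule: infinite_finite_induct) (auto intro: order_trans[OF add_le])

lemma diff_le: "\<bar>f x - f y\<bar> \<le> f (x - y)"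
  using add_le[of "x - y" y] add_le[of "y - x" x] minus[of "x - y"] by simp

lemma le_norm: "f x \<le> (\<Sum>b\<in>Basis. f b) * norm x"
proof -
  have "f x = f (\<Sum>b\<in>Basis. (x \<bullet> b) *\<^sub>R b)"
    by (simp add: euclidean_representation)
  also have "\<dots> \<le> (\<Sum>b\<in>Basis. \<bar>x \<bullet> b\<bar> * f b)"
    using sum_le[of "\<lambda>b. (x \<bullet> b) *\<^sub>R b" Basis] by (simp add: scaleR)
  also have "\<dots> \<le> (\<Sum>b\<in>Basis. norm x * f b)"
    by (intro sum_mono mult_right_mono Basis_le_norm nonneg)
  finally show ?thesis by (simp add: sum_distrib_left mult.commute)
qed

lemma continuous_on: "continuous_on S f"
proof -
  have "(\<Sum>b\<in>Basis. f b)-lipschitz_on S f"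
    by (rule lipschitz_onI)
      (auto simp: dist_real_def dist_norm intro: order_trans[OF diff_le le_norm] sum_nonneg nonneg)
  then show ?thesis by (rule lipschitz_on_continuous_on)
qed

text \<open>A definite seminorm attains a positive minimum on the compact unit sphere.\<close>

lemma norm_le_if_definite:
  assumes definite: "\<And>x. f x = 0 \<Longrightarrow> x = 0"
  shows "\<exists>L>0. \<forall>x. norm x \<le> L * f x"
proof -
  obtain x0 where x0: "x0 \<in> sphere 0 1" "\<And>x. x \<in> sphere 0 1 \<Longrightarrow> f x0 \<le> f x"
    using continuous_attains_inf[OF compact_sphere _ continuous_on, of 0 1]
    by (auto simp: sphere_eq_empty)
  have pos: "f x0 > 0" using definite[of x0] nonneg[of x0] x0(1) by force
  have "norm x \<le> (1 / f x0) * f x" for x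
  proof (cases "x = 0")
    case False
    have "f x0 \<le> f ((1 / norm x) *\<^sub>R x)" using False by (intro x0(2)) simp
    also have "\<dots> = f x / norm x" by (simp add: scaleR)
    finally show ?thesis using pos False by (simp add: field_simps)
  qed simp
  then show ?thesis using pos by (intro exI[of _ "1 / f x0"]) auto
qed

end

lemma real_seminorm_if_is_mat_norm:
  fixes N :: "'a::{real_normed_field,euclidean_space}^'n^'n \<Rightarrow> real"
  assumes "is_mat_norm N"
  shows "real_seminorm N"
proof
  show "N (X + Y) \<le> N X + N Y" for X Y using assms by (simp add: is_mat_norm_def)
  show "N (r *\<^sub>R X) = \<bar>r\<bar> * N X" for r X
  proof -
    have "N (mat_scale (of_real r) X) = norm (of_real r :: 'a) * N X"
      using assms by (simp add: is_mat_norm_def)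
    then show ?thesis by (simp add: mat_scale_of_real)
  qed
qed

lemma norm_vec_le_sum: "norm x \<le> (\<Sum>i\<in>UNIV. norm (x $ i))"
  unfolding norm_vec_def by (rule L2_set_le_sum) simp

lemma norm_matrix_entry_le: "norm (A $ i $ j) \<le> norm A"
  using Finite_Cartesian_Product.norm_nth_le[of "A $ i" j] Finite_Cartesian_Product.norm_nth_le[of A i] by linarith

lemma norm_matrix_mult_le:
  fixes A B :: "'a::real_normed_field^'n^'n"
  shows "norm (A ** B) \<le> real CARD('n) ^ 3 * norm A * norm B"
proof -
  have entry: "norm ((A ** B) $ i $ j) \<le> real CARD('n) * (norm A * norm B)" for i j
  proof -
    have "norm ((A ** B) $ i $ j) = norm (\<Sum>k\<in>UNIV. A $ i $ k * B $ k $ j)"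
      by (simp add: matrix_matrix_mult_def)
    also have "\<dots> \<le> (\<Sum>k\<in>(UNIV::'n set). norm A * norm B)"
      by (rule sum_norm_le)
        (simp add: norm_mult mult_mono norm_matrix_entry_le)
    finally show ?thesis by simp
  qed
  have "norm (A ** B) \<le> (\<Sum>i\<in>UNIV. \<Sum>j\<in>UNIV. norm ((A ** B) $ i $ j))"
    by (rule order_trans[OF norm_vec_le_sum sum_mono[OF norm_vec_le_sum]])
  also have "\<dots> \<le> (\<Sum>i\<in>(UNIV::'n set). \<Sum>j\<in>(UNIV::'n set). real CARD('n) * (norm A * norm B))"
    by (intro sum_mono entry)
  also have "\<dots> = real CARD('n) ^ 3 * norm A * norm B"
    by (simp add: power3_eq_cube)
  finally show ?thesis .
qed

lemma norm_matpow_le: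
  fixes X :: "'a::real_normed_field^'n^'n"
  shows "norm (matpow X j) \<le> norm (mat 1 :: 'a^'n^'n) * (real CARD('n) ^ 3 * norm X) ^ j"
proof (induct j)
  case (Suc j)
  have "norm (matpow X (Suc j)) \<le> real CARD('n) ^ 3 * norm X * norm (matpow X j)"
    using norm_matrix_mult_le[of X "matpow X j"] by simp
  also have "\<dots> \<le> real CARD('n) ^ 3 * norm X * (norm (mat 1 :: 'a^'n^'n) * (real CARD('n) ^ 3 * norm X) ^ j)"
    using Suc by (intro mult_left_mono) auto
  finally show ?case by (simp add: mult_ac)
qed simp

lemma norm_matpow_Suc_le:
  fixes X :: "'a::{real_normed_field,banach}^'n^'n"
  assumes nil: "matpow X D = 0" and "Suc j < D" and "c \<ge> 0"
    and higher: "\<And>k. Suc j < k \<Longrightarrow> norm (matpow X k) \<le> c * norm (mat_exp X - mat 1)"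
  shows "norm (matpow X (Suc j))
    \<le> (real CARD('n) ^ 3 * norm (matpow X j) + real D * c) * norm (mat_exp X - mat 1)"
proof -
  let ?E = "mat_exp X - mat 1"
  let ?R = "\<Sum>l\<in>{2..<D}. inverse (fact l) *\<^sub>R matpow X (j + l)"
  have "{1..<D} = insert 1 {2..<D}" using \<open>Suc j < D\<close> by auto
  then have "matpow X j ** ?E = matpow X (Suc j) + ?R"
    using matpow_mult_mat_exp_minus_1[OF nil, of j] by simp
  then have "norm (matpow X (Suc j)) \<le> norm (matpow X j ** ?E) + norm ?R"
    using norm_triangle_ineq4[of "matpow X j ** ?E" ?R] by (simp add: eq_diff_eq)
  moreover have "norm (matpow X j ** ?E) \<le> real CARD('n) ^ 3 * norm (matpow X j) * norm ?E"
    by (rule norm_matrix_mult_le)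
  moreover have "norm ?R \<le> real D * (c * norm ?E)"
  proof -
    have "norm ?R \<le> (\<Sum>l\<in>{2..<D}. c * norm ?E)"
    proof (rule sum_norm_le)
      fix l assume "l \<in> {2..<D}"
      then have "norm (matpow X (j + l)) \<le> c * norm ?E" by (intro higher) simp
      moreover have "inverse (fact l :: real) \<le> 1" by (simp add: inverse_le_1_iff fact_ge_1)
      then have "inverse (fact l) * norm (matpow X (j + l)) \<le> norm (matpow X (j + l))"
        by (simp add: mult_left_le_one_le)
      ultimately show "norm (inverse (fact l) *\<^sub>R matpow X (j + l)) \<le> c * norm ?E"
        by simp
    qed
    also have "\<dots> \<le> real D * (c * norm ?E)" using \<open>c \<ge> 0\<close> by (simp add: mult_right_mono)
    finally show ?thesis .
  qed
  ultimately show ?thesis by (simp add: distrib_right)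
qed

lemma matpow_le_mat_exp_minus_1:
  fixes K :: "('a::{real_normed_field,banach}^'n^'n) set"
  assumes "bounded K" and nil: "\<forall>X\<in>K. matpow X D = 0" and "1 \<le> k"
  shows "\<exists>c\<ge>0. \<forall>k'\<ge>k. \<forall>X\<in>K. norm (matpow X k') \<le> c * norm (mat_exp X - mat 1)"
  using \<open>1 \<le> k\<close>
proof (induction "D - k" arbitrary: k rule: less_induct)
  case less
  show ?case
  proof (cases "D \<le> k")
    case True
    then show ?thesis using nil matpow_eq_0_mono by (intro exI[of _ 0]) fastforce
  next
    case False
    then have "\<exists>c\<ge>0. \<forall>k'\<ge>Suc k. \<forall>X\<in>K. norm (matpow X k') \<le> c * norm (mat_exp X - mat 1)"
      using less.hyps[of "Suc k"] less.prems by simp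
    then obtain c where c: "c \<ge> 0"
      "\<forall>k'\<ge>Suc k. \<forall>X\<in>K. norm (matpow X k') \<le> c * norm (mat_exp X - mat 1)"
      by blast
    obtain j where k: "k = Suc j" using less.prems by (cases k) auto
    obtain B where B: "B \<ge> 0" "\<And>X. X \<in> K \<Longrightarrow> norm X \<le> B"
      using \<open>bounded K\<close> bounded_pos less_imp_le by metis
    define c' where
      "c' = real CARD('n) ^ 3 * (norm (mat 1 :: 'a^'n^'n) * (real CARD('n) ^ 3 * B) ^ j) + real D * c"
    have "c' \<ge> 0" using c(1) B(1) by (simp add: c'_def)
    have bound_k: "norm (matpow X k) \<le> c' * norm (mat_exp X - mat 1)" if X: "X \<in> K" for X
    proof -
      have "real CARD('n) ^ 3 * norm X \<le> real CARD('n) ^ 3 * B"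
        using B(2)[OF X] by (simp add: mult_left_mono)
      then have "norm (matpow X j) \<le> norm (mat 1 :: 'a^'n^'n) * (real CARD('n) ^ 3 * B) ^ j"
        using norm_matpow_le[of X j]
        by (meson order_trans mult_left_mono power_mono norm_ge_zero zero_le_mult_iff zero_le_power of_nat_0_le_iff)
      then have "real CARD('n) ^ 3 * norm (matpow X j) + real D * c \<le> c'"
        unfolding c'_def by (simp add: mult_left_mono)
      moreover have "norm (matpow X (Suc j))
          \<le> (real CARD('n) ^ 3 * norm (matpow X j) + real D * c) * norm (mat_exp X - mat 1)"
        using c X False k by (intro norm_matpow_Suc_le[OF nil[rule_format, OF X]]) auto
      ultimately show ?thesis unfolding k by (meson norm_ge_zero mult_right_mono order_trans)
    qed
    show ?thesis
    proof (intro exI[of _ "c + c'"] conjI allI impI ballI)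
      show "0 \<le> c + c'" using c(1) \<open>c' \<ge> 0\<close> by simp
      fix k' X assume "k \<le> k'" and X: "X \<in> K"
      let ?e = "norm (mat_exp X - mat 1)"
      from \<open>k \<le> k'\<close> consider "k' = k" | "Suc k \<le> k'" by linarith
      then show "norm (matpow X k') \<le> (c + c') * ?e"
      proof cases
        case 1
        moreover have "0 \<le> c * ?e" using c(1) by simp
        ultimately show ?thesis using bound_k[OF X] by (simp add: distrib_right)
      next
        case 2
        then have "norm (matpow X k') \<le> c * ?e" using c(2) X by blast
        moreover have "0 \<le> c' * ?e" using \<open>c' \<ge> 0\<close> by simp
        ultimately show ?thesis by (simp add: distrib_right)
      qed
    qed
  qed
qed

lemma norm_mat_exp_scaleR_minus_1_le:
  fixes X :: "'a::{real_normed_field,banach}^'n^'n"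
  assumes "matpow X D = 0" and "0 \<le> t" "t \<le> 1"
  shows "norm (mat_exp (t *\<^sub>R X) - mat 1) \<le> t * (\<Sum>l\<in>{1..<D}. norm (matpow X l))"
proof -
  have "norm (mat_exp (t *\<^sub>R X) - mat 1) \<le> (\<Sum>l\<in>{1..<D}. t * norm (matpow X l))"
    unfolding mat_exp_scaleR_minus_1_eq_sum[OF assms(1)]
  proof (rule sum_norm_le)
    fix l assume "l \<in> {1..<D}"
    then have "t ^ l \<le> t" using assms(2,3) power_decreasing[of 1 l t] by simp
    moreover have "t ^ l / fact l \<le> t ^ l"
      using assms(2) by (simp add: divide_le_eq fact_ge_1 mult_le_cancel_left1)
    ultimately have "\<bar>t ^ l / fact l\<bar> \<le> t" using assms(2) by simp
    then show "norm ((t ^ l / fact l) *\<^sub>R matpow X l) \<le> t * norm (matpow X l)"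
      unfolding norm_scaleR by (rule mult_right_mono) simp
  qed
  then show ?thesis by (simp add: sum_distrib_left)
qed

lemma norm_mat_exp_scaleR_minus_1_le_linear:
  fixes K :: "('a::{real_normed_field,banach}^'n^'n) set"
  assumes "bounded K" and "\<forall>X\<in>K. matpow X D = 0"
  shows "\<exists>C\<ge>0. \<forall>t\<in>{0..1}. \<forall>X\<in>K.
    norm (mat_exp (t *\<^sub>R X) - mat 1) \<le> C * t * norm (mat_exp X - mat 1)"
proof -
  obtain c where "c \<ge> 0"
    and c: "\<forall>k\<ge>1. \<forall>X\<in>K. norm (matpow X k) \<le> c * norm (mat_exp X - mat 1)"
    using matpow_le_mat_exp_minus_1[OF assms order_refl] by blast
  show ?thesis
  proof (intro exI[of _ "real D * c"] conjI ballI)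
    fix t :: real and X assume t: "t \<in> {0..1}" and X: "X \<in> K"
    let ?e = "norm (mat_exp X - mat 1)"
    have "norm (mat_exp (t *\<^sub>R X) - mat 1) \<le> t * (\<Sum>l\<in>{1..<D}. norm (matpow X l))"
      using assms(2) X t by (intro norm_mat_exp_scaleR_minus_1_le) auto
    also have "\<dots> \<le> t * (\<Sum>l\<in>{1..<D}. c * ?e)"
      using c X t by (intro mult_left_mono sum_mono) auto
    also have "\<dots> \<le> real D * c * t * ?e"
      using t \<open>c \<ge> 0\<close> by (simp add: mult_right_mono mult_left_mono mult_ac)
    finally show "norm (mat_exp (t *\<^sub>R X) - mat 1) \<le> real D * c * t * ?e" .
  qed (use \<open>c \<ge> 0\<close> in simp)
qed

lemma mat_exp_minus_1_le_linear:
  fixes K :: "('a::{real_normed_field,banach,euclidean_space}^'n^'n) set"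
    and N :: "'a^'n^'n \<Rightarrow> real"
  assumes "compact K" and "\<forall>X\<in>K. nilpotent_mat X" and "is_mat_norm N"
  shows "\<exists>C>0. \<forall>t\<in>{0..1}. \<forall>X\<in>K.
    N (mat_exp (mat_scale (of_real t) X) - mat 1) \<le> C * t * N (mat_exp X - mat 1)"
proof -
  interpret N: real_seminorm N using assms(3) by (rule real_seminorm_if_is_mat_norm)
  have "\<forall>X\<in>K. matpow X DIM('a^'n) = 0"
    using assms(2) matpow_DIM_eq_0 unfolding nilpotent_mat_def by blast
  then obtain C where "C \<ge> 0" and C: "\<forall>t\<in>{0..1}. \<forall>X\<in>K.
      norm (mat_exp (t *\<^sub>R X) - mat 1) \<le> C * t * norm (mat_exp X - mat 1)"
    using norm_mat_exp_scaleR_minus_1_le_linear compact_imp_bounded[OF assms(1)] by blast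
  obtain L where "L > 0" and L: "\<forall>A. norm A \<le> L * N A"
    using N.norm_le_if_definite assms(3) unfolding is_mat_norm_def by blast
  define M where "M = (\<Sum>b\<in>Basis. N b)"
  have "M \<ge> 0" unfolding M_def by (intro sum_nonneg N.nonneg)
  show ?thesis
  proof (intro exI[of _ "M * C * L + 1"] conjI ballI)
    show "M * C * L + 1 > 0" using \<open>M \<ge> 0\<close> \<open>C \<ge> 0\<close> \<open>L > 0\<close> by (simp add: add_nonneg_pos)
    fix t :: real and X assume t: "t \<in> {0..1}" and X: "X \<in> K"
    let ?E = "mat_exp X - mat 1"
    have "norm (mat_exp (t *\<^sub>R X) - mat 1) \<le> C * t * norm ?E" using C X t by blast
    also have "\<dots> \<le> C * t * (L * N ?E)" using L t \<open>C \<ge> 0\<close> by (intro mult_left_mono) auto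
    finally have euclidean: "norm (mat_exp (t *\<^sub>R X) - mat 1) \<le> C * t * (L * N ?E)" .
    have "N (mat_exp (t *\<^sub>R X) - mat 1) \<le> M * norm (mat_exp (t *\<^sub>R X) - mat 1)"
      unfolding M_def by (rule N.le_norm)
    also have "\<dots> \<le> M * (C * t * (L * N ?E))"
      using euclidean \<open>M \<ge> 0\<close> by (rule mult_left_mono)
    also have "\<dots> = (M * C * L) * (t * N ?E)" by (simp add: mult_ac)
    also have "\<dots> \<le> (M * C * L + 1) * (t * N ?E)"
      using t N.nonneg[of ?E] by (intro mult_right_mono) auto
    finally show "N (mat_exp (mat_scale (of_real t) X) - mat 1) \<le> (M * C * L + 1) * t * N ?E"
      by (simp add: mat_scale_of_real mult.assoc)
  qed
qed

theorem mainTheorem11: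
  shows
  "(\<forall>(K :: (real^'n^'n) set) (N :: real^'n^'n \<Rightarrow> real).
      compact K \<and> (\<forall>X\<in>K. nilpotent_mat X) \<and> is_mat_norm N \<longrightarrow>
      (\<exists>C>0. \<forall>t\<in>{0..1}. \<forall>X\<in>K.
         N (mat_exp (mat_scale (of_real t) X) - mat 1) \<le> C * t * N (mat_exp X - mat 1)))
   \<and>
   (\<forall>(K :: (complex^'n^'n) set) (N :: complex^'n^'n \<Rightarrow> real).
      compact K \<and> (\<forall>X\<in>K. nilpotent_mat X) \<and> is_mat_norm N \<longrightarrow>
      (\<exists>C>0. \<forall>t\<in>{0..1}. \<forall>X\<in>K.
         N (mat_exp (mat_scale (of_real t) X) - mat 1) \<le> C * t * N (mat_exp X - mat 1)))"
  using mat_exp_minus_1_le_linear[where 'a=real] mat_exp_minus_1_le_linear[where 'a=complex]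
  by blast

end
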